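(* Let $F:\mathbb{R}^n\to\mathbb{R}$ be $C^2$, let $\mathbf{e}_i$ be one of the standard coordinate unit vectors, and let $L$ be a line parallel to $\mathbf{e}_i$. Suppose $\mathbf{x}^*\in L$ is a local maximum of $F$ in the $\mathbf{e}_i$ direction (i.e. there is $\varepsilon_1>0$ with $F(\mathbf{x}^*+c\,\mathbf{e}_i)<F(\mathbf{x}^* )$ for all $0<|c|<\varepsilon_1$) and that $\frac{\partial^2 F}{\partial \mathbf{e}_i^2}(\mathbf{x}^* )<0$. Then there exists $\epsilon>0$ such that for every orthogonal grid of spacing $dx<\epsilon$ having $L$ as one of its grid lines, there is a grid ridge point $\mathbf{x}^g$ of $F$ with $\|\mathbf{x}^*-\mathbf{x}^g\|\le dx$.
   Context: An orthogonal grid of spacing $dx$ in $\mathbb{R}^n$ is a set of points $\mathbf{p}+dx\,\mathbb{Z}^n$ with coordinate directions $\mathbf{e}_1,\dots,\mathbf{e}_n$; its grid lines are the lines through grid points parallel to some $\mathbf{e}_k$. A grid point $\mathbf{x}_0$ is a grid ridge point of $F$ if $F(\mathbf{x}_0)\ge F(\mathbf{x}_0\pm dx\,\mathbf{e}_k)$ (both signs) for at least one $k\in\{1,\dots,n\}$. *)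

theory Defs
  imports "HOL-Analysis.Analysis"
begin

definition C2 :: "('a::euclidean_space \<Rightarrow> real) \<Rightarrow> bool" where
  "C2 F \<longleftrightarrow> (\<exists>(F' :: 'a \<Rightarrow> 'a \<Rightarrow>\<^sub>L real) (F'' :: 'a \<Rightarrow> 'a \<Rightarrow>\<^sub>L ('a \<Rightarrow>\<^sub>L real)).
      (\<forall>x. (F has_derivative blinfun_apply (F' x)) (at x) \<and>
           (F' has_derivative blinfun_apply (F'' x)) (at x)) \<and>
      continuous_on UNIV F'')"

definition dir_deriv :: "('a::real_normed_vector \<Rightarrow> real) \<Rightarrow> 'a \<Rightarrow> 'a \<Rightarrow> real" where
  "dir_deriv F e y = deriv (\<lambda>t. F (y + t *\<^sub>R e)) 0"

definition dir_deriv2 :: "('a::real_normed_vector \<Rightarrow> real) \<Rightarrow> 'a \<Rightarrow> 'a \<Rightarrow> real" where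
  "dir_deriv2 F e x = deriv (\<lambda>s. dir_deriv F e (x + s *\<^sub>R e)) 0"

definition grid :: "'a::euclidean_space \<Rightarrow> real \<Rightarrow> 'a set" where
  "grid p dx = {x. \<exists>z :: 'a \<Rightarrow> int. x = p + (\<Sum>b\<in>Basis. (dx * of_int (z b)) *\<^sub>R b)}"

definition grid_lines :: "'a::euclidean_space \<Rightarrow> real \<Rightarrow> 'a set set" where
  "grid_lines p dx = {{g + t *\<^sub>R b | t. True} | g b. g \<in> grid p dx \<and> b \<in> Basis}"

definition grid_ridge_point :: "('a::euclidean_space \<Rightarrow> real) \<Rightarrow> 'a \<Rightarrow> real \<Rightarrow> 'a \<Rightarrow> bool" where
  "grid_ridge_point F p dx x0 \<longleftrightarrow> x0 \<in> grid p dx \<and>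
     (\<exists>k\<in>Basis. F x0 \<ge> F (x0 + dx *\<^sub>R k) \<and> F x0 \<ge> F (x0 - dx *\<^sub>R k))"

end

theory Submission imports Defs begin

text \<open>Restrict F to the line L, f c = F (x* + c e_i). Since f' (0) = 0 and f'' (0) < 0,
  f' is nonnegative just left of 0 and nonpositive just right of it, so f is nondecreasing on
  (-\<delta>, 0] and nonincreasing on [0, \<delta>). A grid having L as a grid line meets L in a
  progression of step dx; of its two consecutive points c \<le> 0 < c + dx, the one where f is
  larger is a grid ridge point in direction e_i as soon as 2 dx < \<delta>.\<close>

lemma has_vector_derivative_along_line:
  assumes "(F has_derivative D) (at (y + t *\<^sub>R e))"
  shows "((\<lambda>t. F (y + t *\<^sub>R e)) has_vector_derivative D e) (at t)"
proof -
  have "((\<lambda>t. y + t *\<^sub>R e) has_derivative (\<lambda>h. h *\<^sub>R e)) (at t)"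
    by (auto intro!: derivative_eq_intros)
  from has_derivative_compose[OF this assms] show ?thesis
    using linear_cmul[OF has_derivative_linear[OF assms]]
    by (simp add: has_vector_derivative_def)
qed

lemma C2_line_derivatives:
  fixes F :: "'a::euclidean_space \<Rightarrow> real"
  assumes "C2 F"
  obtains h where "\<And>c. ((\<lambda>c. F (x + c *\<^sub>R e)) has_real_derivative h c) (at c)"
    and "(h has_real_derivative dir_deriv2 F e x) (at 0)"
proof -
  obtain F' F'' where F': "\<And>y. (F has_derivative blinfun_apply (F' y)) (at y)"
    and F'': "\<And>y. (F' has_derivative blinfun_apply (F'' y)) (at y)"
    using assms unfolding C2_def by blast
  define h where "h s = blinfun_apply (F' (x + s *\<^sub>R e)) e" for s
  have h: "((\<lambda>c. F (x + c *\<^sub>R e)) has_real_derivative h c) (at c)" for c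
    unfolding h_def has_real_derivative_iff_has_vector_derivative
    by (rule has_vector_derivative_along_line[OF F'[of "x + c *\<^sub>R e"]])
  have "((\<lambda>s. F' (x + s *\<^sub>R e)) has_vector_derivative F'' x e) (at 0)"
    using has_vector_derivative_along_line[OF F''[of "x + 0 *\<^sub>R e"]] by simp
  from bounded_linear.has_vector_derivative[OF bounded_linear_apply_blinfun[of e] this]
  have h': "(h has_real_derivative F'' x e e) (at 0)"
    unfolding h_def has_real_derivative_iff_has_vector_derivative .
  have "dir_deriv F e y = F' y e" for y
    using has_vector_derivative_along_line[OF F'[of "y + 0 *\<^sub>R e"]]
    unfolding dir_deriv_def has_real_derivative_iff_has_vector_derivative[symmetric]
    by (simp add: DERIV_imp_deriv)
  then have "dir_deriv2 F e x = F'' x e e"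
    using h' unfolding dir_deriv2_def h_def by (simp add: DERIV_imp_deriv)
  with h h' show ?thesis using that by metis
qed

lemma has_real_derivative_neg_sign_change:
  fixes h :: "real \<Rightarrow> real"
  assumes "(h has_real_derivative D) (at x)" "h x = 0" "D < 0"
  obtains \<delta> where "\<delta> > 0"
    and "\<And>y. x - \<delta> < y \<Longrightarrow> y \<le> x \<Longrightarrow> 0 \<le> h y"
    and "\<And>y. x \<le> y \<Longrightarrow> y < x + \<delta> \<Longrightarrow> h y \<le> 0"
proof -
  have "((\<lambda>y. (h y - h x) / (y - x)) \<longlongrightarrow> D) (at x)"
    using assms(1) has_field_derivative_iff by blast
  then have "eventually (\<lambda>y. h y / (y - x) < 0) (at x)"
    using order_tendstoD(2)[OF _ assms(3)] assms(2) by simp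
  then obtain \<delta> where "\<delta> > 0" and \<delta>: "\<And>y. y \<noteq> x \<Longrightarrow> dist y x < \<delta> \<Longrightarrow> h y / (y - x) < 0"
    unfolding eventually_at by blast
  show ?thesis
  proof
    show "0 \<le> h y" if "x - \<delta> < y" "y \<le> x" for y
      using \<delta>[of y] that assms(2) by (cases "y = x") (auto simp: dist_real_def divide_less_0_iff)
    show "h y \<le> 0" if "x \<le> y" "y < x + \<delta>" for y
      using \<delta>[of y] that assms(2) by (cases "y = x") (auto simp: dist_real_def divide_less_0_iff)
  qed fact
qed

lemma unimodal_near_nondegenerate_local_max:
  fixes f h :: "real \<Rightarrow> real"
  assumes f': "\<And>c. (f has_real_derivative h c) (at c)"
    and "e > 0" "\<And>y. \<bar>x - y\<bar> < e \<Longrightarrow> f y \<le> f x"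
    and "(h has_real_derivative D) (at x)" "D < 0"
  obtains \<delta> where "\<delta> > 0"
    and "\<And>y z. x - \<delta> < y \<Longrightarrow> y \<le> z \<Longrightarrow> z \<le> x \<Longrightarrow> f y \<le> f z"
    and "\<And>y z. x \<le> y \<Longrightarrow> y \<le> z \<Longrightarrow> z < x + \<delta> \<Longrightarrow> f z \<le> f y"
proof -
  have "h x = 0"
    using DERIV_local_max[OF f' assms(2)] assms(3) by blast
  then obtain \<delta> where "\<delta> > 0"
    and left: "\<And>y. x - \<delta> < y \<Longrightarrow> y \<le> x \<Longrightarrow> 0 \<le> h y"
    and right: "\<And>y. x \<le> y \<Longrightarrow> y < x + \<delta> \<Longrightarrow> h y \<le> 0"
    using has_real_derivative_neg_sign_change[OF assms(4) _ assms(5)] by blast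
  show ?thesis
  proof
    show "f y \<le> f z" if "x - \<delta> < y" "y \<le> z" "z \<le> x" for y z
    proof (rule DERIV_nonneg_imp_nondecreasing[OF \<open>y \<le> z\<close>])
      fix t assume "y \<le> t" "t \<le> z"
      then show "\<exists>d. (f has_real_derivative d) (at t) \<and> 0 \<le> d"
        using f'[of t] left[of t] that by auto
    qed
    show "f z \<le> f y" if "x \<le> y" "y \<le> z" "z < x + \<delta>" for y z
    proof (rule DERIV_nonpos_imp_nonincreasing[OF \<open>y \<le> z\<close>])
      fix t assume "y \<le> t" "t \<le> z"
      then show "\<exists>d. (f has_real_derivative d) (at t) \<and> d \<le> 0"
        using f'[of t] right[of t] that by auto
    qed
  qed fact
qed

lemma unimodal_discrete_local_max:
  fixes f :: "real \<Rightarrow> real"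
  assumes "0 < dx" "2 * dx < \<delta>"
    and incr: "\<And>y z. x - \<delta> < y \<Longrightarrow> y \<le> z \<Longrightarrow> z \<le> x \<Longrightarrow> f y \<le> f z"
    and decr: "\<And>y z. x \<le> y \<Longrightarrow> y \<le> z \<Longrightarrow> z < x + \<delta> \<Longrightarrow> f z \<le> f y"
  obtains k :: int where "\<bar>dx * k - t - x\<bar> \<le> dx"
    and "f (dx * k - t - dx) \<le> f (dx * k - t)" and "f (dx * k - t + dx) \<le> f (dx * k - t)"
proof -
  define k where "k = \<lfloor>(t + x) / dx\<rfloor>"
  define c where "c = dx * k - t"
  have "dx * k \<le> t + x" "t + x < dx * k + dx"
    using \<open>0 < dx\<close> floor_divide_lower[of dx "t + x"] floor_divide_upper[of dx "t + x"]
    unfolding k_def by (simp_all add: algebra_simps)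
  then have c: "x - dx < c" "c \<le> x"
    unfolding c_def by linarith+
  have c_incr: "f (c - dx) \<le> f c"
    using c assms(1,2) by (intro incr) auto
  have c'_decr: "f (c + dx + dx) \<le> f (c + dx)"
    using c assms(1,2) by (intro decr) auto
  have shift: "dx * of_int (k + 1) - t = c + dx"
    unfolding c_def by (simp add: algebra_simps)
  show ?thesis
  proof (cases "f (c + dx) \<le> f c")
    case True
    with c c_incr show ?thesis
      using that[of k] unfolding c_def by auto
  next
    case False
    with c c'_decr show ?thesis
      using that[of "k + 1"] unfolding shift by auto
  qed
qed

lemma grid_add_Basis:
  assumes "g \<in> grid p dx" "b \<in> Basis"
  shows "g + (dx * of_int k) *\<^sub>R b \<in> grid p dx"
proof -
  obtain z where z: "g = p + (\<Sum>i\<in>Basis. (dx * of_int (z i)) *\<^sub>R i)"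
    using assms(1) unfolding grid_def by auto
  define z' where "z' i = z i + (if i = b then k else 0)" for i
  have "(\<Sum>i\<in>Basis. (dx * of_int (z' i)) *\<^sub>R i)
      = (\<Sum>i\<in>Basis. (dx * of_int (z i)) *\<^sub>R i + (if i = b then (dx * of_int k) *\<^sub>R b else 0))"
    unfolding z'_def by (intro sum.cong) (auto simp: algebra_simps)
  also have "\<dots> = (\<Sum>i\<in>Basis. (dx * of_int (z i)) *\<^sub>R i) + (dx * of_int k) *\<^sub>R b"
    using assms(2) by (simp add: sum.distrib)
  finally show ?thesis
    unfolding grid_def using z by (auto intro!: exI[of _ z'] simp: algebra_simps)
qed

lemma Basis_line_eq_imp_eq:
  assumes "e \<in> Basis" "b \<in> Basis"
    and "{a + t *\<^sub>R e | t. True} = {g + t *\<^sub>R b | t. True}"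
  shows "b = e"
proof (rule ccontr)
  assume "b \<noteq> e"
  have "g \<in> {a + t *\<^sub>R e | t. True}"
    using assms(3) by (metis (mono_tags, lifting) mem_Collect_eq scale_zero_left add_0_right)
  then obtain t0 where "g = a + t0 *\<^sub>R e"
    by auto
  have "g + 1 *\<^sub>R b \<in> {a + t *\<^sub>R e | t. True}"
    using assms(3) by blast
  then obtain t1 where "g + b = a + t1 *\<^sub>R e"
    by auto
  with \<open>g = a + t0 *\<^sub>R e\<close> have "b = (t1 - t0) *\<^sub>R e"
    by (simp add: algebra_simps)
  moreover have "b \<bullet> e = 0"
    using \<open>b \<noteq> e\<close> assms(1,2) inner_not_same_Basis by blast
  ultimately have "b = 0"
    using assms(1) by simp
  with assms(2) show False
    using nonzero_Basis by blast
qed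

lemma grid_line_parallel_Basis:
  assumes "e \<in> Basis" "{a + t *\<^sub>R e | t. True} \<in> grid_lines p dx"
  obtains g where "g \<in> grid p dx" and "{a + t *\<^sub>R e | t. True} = {g + t *\<^sub>R e | t. True}"
proof -
  obtain g b where g: "g \<in> grid p dx" and b: "b \<in> Basis"
    and L: "{a + t *\<^sub>R e | t. True} = {g + t *\<^sub>R b | t. True}"
    using assms(2) unfolding grid_lines_def by blast
  have "b = e"
    using Basis_line_eq_imp_eq[OF assms(1) b L] .
  with g L show ?thesis
    using that by blast
qed

lemma grid_ridge_point_near_unimodal_max:
  fixes F :: "'a::euclidean_space \<Rightarrow> real"
  assumes "e \<in> Basis" "{a + t *\<^sub>R e | t. True} \<in> grid_lines p dx" "x \<in> {a + t *\<^sub>R e | t. True}"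
    and "0 < dx" "2 * dx < \<delta>"
    and incr: "\<And>y z. - \<delta> < y \<Longrightarrow> y \<le> z \<Longrightarrow> z \<le> 0 \<Longrightarrow> F (x + y *\<^sub>R e) \<le> F (x + z *\<^sub>R e)"
    and decr: "\<And>y z. 0 \<le> y \<Longrightarrow> y \<le> z \<Longrightarrow> z < \<delta> \<Longrightarrow> F (x + z *\<^sub>R e) \<le> F (x + y *\<^sub>R e)"
  shows "\<exists>xg. grid_ridge_point F p dx xg \<and> norm (x - xg) \<le> dx"
proof -
  define f where "f c = F (x + c *\<^sub>R e)" for c
  obtain g where g: "g \<in> grid p dx" and "{a + t *\<^sub>R e | t. True} = {g + t *\<^sub>R e | t. True}"
    using grid_line_parallel_Basis[OF assms(1,2)] .
  then obtain t where x: "x = g + t *\<^sub>R e"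
    using assms(3) by auto
  obtain k :: int where k: "\<bar>dx * k - t\<bar> \<le> dx"
    "f (dx * k - t - dx) \<le> f (dx * k - t)" "f (dx * k - t + dx) \<le> f (dx * k - t)"
    using unimodal_discrete_local_max[of dx \<delta> 0 f t] assms(4,5) incr decr
    unfolding f_def by auto
  define xg where "xg = x + (dx * k - t) *\<^sub>R e"
  have "xg = g + (dx * k) *\<^sub>R e"
    unfolding xg_def x by (simp add: algebra_simps)
  then have "xg \<in> grid p dx"
    using grid_add_Basis[OF g assms(1)] by simp
  moreover have "F xg = f (dx * k - t)"
    "F (xg + dx *\<^sub>R e) = f (dx * k - t + dx)" "F (xg - dx *\<^sub>R e) = f (dx * k - t - dx)"
    unfolding f_def xg_def by (simp_all add: algebra_simps)
  ultimately have "grid_ridge_point F p dx xg"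
    unfolding grid_ridge_point_def using assms(1) k(2,3) by (intro conjI bexI[of _ e]) auto
  moreover have "norm (x - xg) \<le> dx"
    using k(1) assms(1) unfolding xg_def by simp
  ultimately show ?thesis
    by blast
qed

theorem theorem1:
  fixes F :: "'a::euclidean_space \<Rightarrow> real" and ei a xs :: 'a and L :: "'a set"
  assumes "C2 F"
    and "ei \<in> Basis"
    and "L = {a + t *\<^sub>R ei | t. True}"
    and "xs \<in> L"
    and "\<exists>\<epsilon>1>0. \<forall>c. 0 < \<bar>c\<bar> \<and> \<bar>c\<bar> < \<epsilon>1 \<longrightarrow> F (xs + c *\<^sub>R ei) < F xs"
    and "dir_deriv2 F ei xs < 0"
  shows "\<exists>\<epsilon>>0. \<forall>p dx. 0 < dx \<and> dx < \<epsilon> \<and> L \<in> grid_lines p dx \<longrightarrow>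
           (\<exists>xg. grid_ridge_point F p dx xg \<and> norm (xs - xg) \<le> dx)"
proof -
  define f where "f c = F (xs + c *\<^sub>R ei)" for c
  obtain h where f': "\<And>c. (f has_real_derivative h c) (at c)"
    and h': "(h has_real_derivative dir_deriv2 F ei xs) (at 0)"
    using C2_line_derivatives[OF assms(1)] unfolding f_def by blast
  obtain e1 where "e1 > 0" and e1: "\<And>c. 0 < \<bar>c\<bar> \<Longrightarrow> \<bar>c\<bar> < e1 \<Longrightarrow> f c < f 0"
    using assms(5) unfolding f_def by auto
  have "f y \<le> f 0" if "\<bar>0 - y\<bar> < e1" for y
    using e1[of y] that by (cases "y = 0") auto
  then obtain \<delta> where "\<delta> > 0"
    and "\<And>y z. - \<delta> < y \<Longrightarrow> y \<le> z \<Longrightarrow> z \<le> 0 \<Longrightarrow> f y \<le> f z"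
    and "\<And>y z. 0 \<le> y \<Longrightarrow> y \<le> z \<Longrightarrow> z < \<delta> \<Longrightarrow> f z \<le> f y"
    using unimodal_near_nondegenerate_local_max[OF f' \<open>e1 > 0\<close> _ h' assms(6)] by auto
  then have "\<exists>xg. grid_ridge_point F p dx xg \<and> norm (xs - xg) \<le> dx"
    if "0 < dx" "dx < \<delta> / 2" "L \<in> grid_lines p dx" for p dx
    using that assms(2-4)
    by (intro grid_ridge_point_near_unimodal_max[where \<delta> = \<delta>]) (auto simp: f_def)
  with \<open>\<delta> > 0\<close> show ?thesis
    by (intro exI[of _ "\<delta> / 2"]) auto
qed

end
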